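(* Let $n$ be a natural number and $s$ a negative integer with $n+s>0$, and let $\Delta$ be a divisible design graph with parameters $(V,K,\lambda_1,\lambda_2;m,n)$, where $m=\frac{(-s)(n-1)}{n+s}$, $V=\frac{n(-s)(n-1)}{n+s}$, $K=(-s)(n-1)$, $\lambda_1=(-s)(n+s-1)$, $\lambda_2=\frac{(-s)(n-1)(n+s)}{n}$. Let $P_1,\dots,P_m$ be its canonical classes. Then for all $i,j\in\{1,\dots,m\}$ (including $i=j$), every vertex of $P_i$ has exactly $n+s$ neighbours in $P_j$; i.e., the quotient matrix of the canonical partition is $(n+s)J$, where $J$ is the $m\times m$ all-ones matrix.
   Context: A $K$-regular graph on $V$ vertices, neither complete nor edgeless, is a divisible design graph with parameters $(V,K,\lambda_1,\lambda_2;m,n)$ if its vertex set can be partitioned into $m$ classes (canonical classes) of size $n$ such that any two distinct vertices in the same class have exactly $\lambda_1$ common neighbours and any two vertices in different classes have exactly $\lambda_2$ common neighbours. The quotient matrix of the canonical partition is the $m\times m$ matrix $R=(r_{ij})$ where $r_{ij}$ is the number of neighbours in $P_j$ of a vertex of $P_i$ (this number is known to be independent of the chosen vertex of $P_i$). *)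

theory Defs
  imports Complex_Main "HOL-Library.Disjoint_Sets"
begin

definition nbhd :: "'a set \<Rightarrow> ('a \<Rightarrow> 'a \<Rightarrow> bool) \<Rightarrow> 'a \<Rightarrow> 'a set" where
  "nbhd Vs E v = {u \<in> Vs. E v u}"

definition simple_graph :: "'a set \<Rightarrow> ('a \<Rightarrow> 'a \<Rightarrow> bool) \<Rightarrow> bool" where
  "simple_graph Vs E \<longleftrightarrow> finite Vs \<and> (\<forall>u v. E u v \<longrightarrow> u \<in> Vs \<and> v \<in> Vs)
     \<and> (\<forall>u v. E u v \<longleftrightarrow> E v u) \<and> (\<forall>v. \<not> E v v)"

definition ddg :: "'a set \<Rightarrow> ('a \<Rightarrow> 'a \<Rightarrow> bool) \<Rightarrow> 'a set set \<Rightarrow>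
    nat \<Rightarrow> nat \<Rightarrow> nat \<Rightarrow> nat \<Rightarrow> nat \<Rightarrow> nat \<Rightarrow> bool" where
  "ddg Vs E P V K l1 l2 m n \<longleftrightarrow>
     simple_graph Vs E \<and> card Vs = V
     \<and> (\<forall>v\<in>Vs. card (nbhd Vs E v) = K)
     \<and> \<not> (\<forall>u\<in>Vs. \<forall>v\<in>Vs. u \<noteq> v \<longrightarrow> E u v)
     \<and> \<not> (\<forall>u v. \<not> E u v)
     \<and> partition_on Vs P \<and> card P = m \<and> (\<forall>X\<in>P. card X = n)
     \<and> (\<forall>X\<in>P. \<forall>u\<in>X. \<forall>v\<in>X. u \<noteq> v \<longrightarrow> card (nbhd Vs E u \<inter> nbhd Vs E v) = l1)
     \<and> (\<forall>X\<in>P. \<forall>Y\<in>P. X \<noteq> Y \<longrightarrow> (\<forall>u\<in>X. \<forall>v\<in>Y. card (nbhd Vs E u \<inter> nbhd Vs E v) = l2))"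

end

theory Submission
  imports Defs
begin

text \<open>Write \<open>r(v, Y)\<close> for the number of neighbours of a vertex \<open>v\<close> in a class \<open>Y\<close>.
  Counting walks of length three from \<open>v \<in> X\<close> to \<open>w \<in> Y\<close> in two ways, and using
  \<open>\<lambda>\<^sub>1 \<noteq> \<lambda>\<^sub>2\<close>, gives \<open>r(v, Y) = r(w, X)\<close>. Consequently, for fixed \<open>v \<in> X\<close>, both
  \<open>\<Sum>\<^sub>Z r(v, Z) = K = m(n + s)\<close> and, counting walks \<open>v - u - x\<close> with \<open>x \<in> X\<close>,
  \<open>\<Sum>\<^sub>Z r(v, Z)\<^sup>2 = K + (n - 1)\<lambda>\<^sub>1 = m(n + s)\<^sup>2\<close>. Hence
  \<open>\<Sum>\<^sub>Z (r(v, Z) - (n + s))\<^sup>2 = 0\<close> over the \<open>m\<close> classes.\<close>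

lemma sum_partition_on:
  assumes "partition_on A P" "finite A" "S \<subseteq> A"
  shows "sum g S = (\<Sum>Z\<in>P. sum g (S \<inter> Z))"
proof -
  have "S = (\<Union>Z\<in>P. S \<inter> Z)" using partition_onD1[OF assms(1)] assms(3) by blast
  then have "sum g S = sum g (\<Union>Z\<in>P. S \<inter> Z)" by simp
  also have "\<dots> = (\<Sum>Z\<in>P. sum g (S \<inter> Z))"
    using assms finite_elements[OF assms(2,1)] partition_onD2[OF assms(1)]
    by (intro sum.UNION_disjoint) (auto dest: disjointD intro: finite_subset)
  finally show ?thesis .
qed

lemma eq_const_if_sum_and_sum_squares_eq:
  fixes f :: "'b \<Rightarrow> 'a::linordered_idom"
  assumes "finite A"
    and "(\<Sum>x\<in>A. f x) = of_nat (card A) * k"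
    and "(\<Sum>x\<in>A. (f x)\<^sup>2) = of_nat (card A) * k\<^sup>2"
    and "x \<in> A"
  shows "f x = k"
proof -
  have "(\<Sum>y\<in>A. (f y - k)\<^sup>2) = (\<Sum>y\<in>A. (f y)\<^sup>2 - 2 * k * f y + k\<^sup>2)"
    by (simp add: power2_diff algebra_simps)
  also have "\<dots> = (\<Sum>y\<in>A. (f y)\<^sup>2) - 2 * k * (\<Sum>y\<in>A. f y) + of_nat (card A) * k\<^sup>2"
    by (simp add: sum.distrib sum_subtractf sum_distrib_left)
  also have "\<dots> = 0" using assms(2,3) by (simp add: power2_eq_square)
  finally have "(\<Sum>y\<in>A. (f y - k)\<^sup>2) = 0" .
  then have "(f x - k)\<^sup>2 = 0"
    using sum_nonneg_eq_0_iff[OF assms(1), of "\<lambda>y. (f y - k)\<^sup>2"] assms(4) by simp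
  then show ?thesis by simp
qed

lemma nbhd_subset: "nbhd Vs E v \<subseteq> Vs"
  by (auto simp: nbhd_def)

lemma finite_nbhd: "finite Vs \<Longrightarrow> finite (nbhd Vs E v)"
  using nbhd_subset finite_subset by metis

lemma sum_card_nbhd_Int_swap:
  assumes "simple_graph Vs E" and "B \<subseteq> Vs"
  shows "(\<Sum>u\<in>nbhd Vs E v. card (nbhd Vs E u \<inter> B)) =
    (\<Sum>x\<in>B. card (nbhd Vs E v \<inter> nbhd Vs E x))"
proof -
  have fin: "finite Vs" and sym: "\<And>u x. E u x = E x u"
    using assms(1) by (auto simp: simple_graph_def)
  have finB: "finite B" using assms(2) fin finite_subset by blast
  have "(\<Sum>u\<in>nbhd Vs E v. card (nbhd Vs E u \<inter> B)) =
      (\<Sum>u\<in>nbhd Vs E v. \<Sum>x\<in>B. of_bool (E u x))"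
  proof (rule sum.cong[OF refl])
    fix u
    have "nbhd Vs E u \<inter> B = B \<inter> {x. E u x}" using assms(2) by (auto simp: nbhd_def)
    then show "card (nbhd Vs E u \<inter> B) = (\<Sum>x\<in>B. of_bool (E u x))"
      using finB by simp
  qed
  also have "\<dots> = (\<Sum>x\<in>B. \<Sum>u\<in>nbhd Vs E v. of_bool (E u x))"
    by (rule sum.swap)
  also have "\<dots> = (\<Sum>x\<in>B. card (nbhd Vs E v \<inter> nbhd Vs E x))"
  proof (rule sum.cong[OF refl])
    fix x
    have "nbhd Vs E v \<inter> nbhd Vs E x = nbhd Vs E v \<inter> {u. E u x}" by (auto simp: nbhd_def sym)
    then show "(\<Sum>u\<in>nbhd Vs E v. of_bool (E u x)) = card (nbhd Vs E v \<inter> nbhd Vs E x)"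
      using finite_nbhd[OF fin] by simp
  qed
  finally show ?thesis .
qed

locale divisible_design_graph =
  fixes Vs :: "'a set" and E :: "'a \<Rightarrow> 'a \<Rightarrow> bool" and P :: "'a set set"
    and V K l1 l2 m n :: nat
  assumes ddg: "ddg Vs E P V K l1 l2 m n"
begin

abbreviation N :: "'a \<Rightarrow> 'a set" where
  "N \<equiv> nbhd Vs E"

lemma simple_graph: "simple_graph Vs E"
  and degree: "v \<in> Vs \<Longrightarrow> card (N v) = K"
  and partition: "partition_on Vs P"
  and card_classes: "card P = m"
  and card_class: "X \<in> P \<Longrightarrow> card X = n"
  and common_nbhd_same_class:
    "\<lbrakk>X \<in> P; u \<in> X; v \<in> X; u \<noteq> v\<rbrakk> \<Longrightarrow> card (N u \<inter> N v) = l1"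
  and common_nbhd_other_class:
    "\<lbrakk>X \<in> P; Y \<in> P; X \<noteq> Y; u \<in> X; v \<in> Y\<rbrakk> \<Longrightarrow> card (N u \<inter> N v) = l2"
  using ddg unfolding ddg_def by simp_all

lemma finite_Vs: "finite Vs"
  using simple_graph by (simp add: simple_graph_def)

lemma adjacent_in_Vs: "E u v \<Longrightarrow> u \<in> Vs \<and> v \<in> Vs"
  using simple_graph unfolding simple_graph_def by blast

lemma class_subset: "X \<in> P \<Longrightarrow> X \<subseteq> Vs"
  using partition_onD1[OF partition] by blast

lemma sum_card_common_nbhd_in_class:
  assumes "Y \<in> P" "w \<in> Y" "S \<subseteq> Y"
  shows "int (\<Sum>u\<in>S. card (N u \<inter> N w)) =
    int K * of_bool (w \<in> S) + int l1 * (int (card S) - of_bool (w \<in> S))"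
proof -
  have finS: "finite S" using assms class_subset finite_Vs finite_subset by metis
  have l1: "card (N u \<inter> N w) = l1" if "u \<in> S - {w}" for u
    using common_nbhd_same_class assms that by blast
  show ?thesis
  proof (cases "w \<in> S")
    case True
    have "(\<Sum>u\<in>S. card (N u \<inter> N w)) = card (N w \<inter> N w) + (\<Sum>u\<in>S - {w}. card (N u \<inter> N w))"
      using finS True by (rule sum.remove)
    also have "\<dots> = K + l1 * card (S - {w})"
      using l1 degree[of w] class_subset[OF assms(1)] assms(2) by (simp add: subset_iff)
    finally have "(\<Sum>u\<in>S. card (N u \<inter> N w)) = K + l1 * card (S - {w})" .
    moreover have "card S > 0" using True finS card_gt_0_iff by blast
    ultimately show ?thesis using True finS by (simp add: of_nat_diff)
  next
    case False
    then show ?thesis using l1 by simp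
  qed
qed

lemma sum_card_common_nbhd_outside_class:
  assumes "Y \<in> P" "w \<in> Y" "S \<subseteq> Vs - Y"
  shows "(\<Sum>u\<in>S. card (N u \<inter> N w)) = l2 * card S"
proof -
  have "card (N u \<inter> N w) = l2" if u: "u \<in> S" for u
  proof -
    obtain X where "X \<in> P" "u \<in> X"
      using partition_onD1[OF partition] assms(3) u by blast
    then show ?thesis
      using common_nbhd_other_class[of X Y u w] assms u by blast
  qed
  then show ?thesis by simp
qed

lemma sum_card_common_nbhd:
  assumes "v \<in> Vs" "Y \<in> P" "w \<in> Y"
  shows "int (\<Sum>u\<in>N v. card (N u \<inter> N w)) =
    (int K - int l1) * of_bool (E v w) + int l2 * int K + (int l1 - int l2) * int (card (N v \<inter> Y))"
proof -
  have fin: "finite (N v)" using finite_nbhd[OF finite_Vs] .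
  have "w \<in> N v \<inter> Y \<longleftrightarrow> E v w"
    using assms(3) adjacent_in_Vs by (auto simp: nbhd_def)
  then have in_Y: "int (\<Sum>u\<in>N v \<inter> Y. card (N u \<inter> N w)) =
      int K * of_bool (E v w) + int l1 * (int (card (N v \<inter> Y)) - of_bool (E v w))"
    using sum_card_common_nbhd_in_class[OF assms(2,3)] by simp
  have "N v - Y \<subseteq> Vs - Y" using nbhd_subset[of Vs E v] by blast
  then have off_Y: "(\<Sum>u\<in>N v - Y. card (N u \<inter> N w)) = l2 * card (N v - Y)"
    by (rule sum_card_common_nbhd_outside_class[OF assms(2,3)])
  have "card (N v \<inter> Y) + card (N v - Y) = K"
    using card_Int_Diff[OF fin] degree[OF assms(1)] by simp
  then have card_off_Y: "int (card (N v - Y)) = int K - int (card (N v \<inter> Y))"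
    by linarith
  have "(\<Sum>u\<in>N v. card (N u \<inter> N w)) =
      (\<Sum>u\<in>N v \<inter> Y. card (N u \<inter> N w)) + (\<Sum>u\<in>N v - Y. card (N u \<inter> N w))"
    using fin by (rule sum.Int_Diff)
  then have "int (\<Sum>u\<in>N v. card (N u \<inter> N w)) =
      int (\<Sum>u\<in>N v \<inter> Y. card (N u \<inter> N w)) + int l2 * int (card (N v - Y))"
    using off_Y by simp
  then show ?thesis
    unfolding in_Y card_off_Y by (simp add: algebra_simps)
qed

lemma card_nbhd_Int_class_sym:
  assumes "l1 \<noteq> l2" "X \<in> P" "Y \<in> P" "v \<in> X" "w \<in> Y"
  shows "card (N v \<inter> Y) = card (N w \<inter> X)"
proof -
  have "v \<in> Vs" "w \<in> Vs" using assms class_subset by blast+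
  moreover have "(\<Sum>u\<in>N v. card (N u \<inter> N w)) = (\<Sum>u\<in>N w. card (N u \<inter> N v))"
    using sum_card_nbhd_Int_swap[OF simple_graph nbhd_subset[of Vs E w], of v]
      sum_card_nbhd_Int_swap[OF simple_graph nbhd_subset[of Vs E v], of w]
    by (simp add: Int_commute)
  moreover have "E v w = E w v"
    using simple_graph by (simp add: simple_graph_def)
  ultimately have "(int l1 - int l2) * int (card (N v \<inter> Y)) =
      (int l1 - int l2) * int (card (N w \<inter> X))"
    using sum_card_common_nbhd[of v Y w] sum_card_common_nbhd[of w X v] assms(2-5)
    by simp
  then show ?thesis using assms(1) by simp
qed

lemma sum_card_nbhd_Int_classes:
  assumes "v \<in> Vs"
  shows "(\<Sum>Z\<in>P. card (N v \<inter> Z)) = K"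
  using sum_partition_on[OF partition finite_Vs nbhd_subset[of Vs E v], of "\<lambda>_. 1::nat"]
    degree[OF assms]
  by simp

lemma sum_card_nbhd_Int_classes_squared:
  assumes "l1 \<noteq> l2" "X \<in> P" "v \<in> X"
  shows "(\<Sum>Z\<in>P. (card (N v \<inter> Z))\<^sup>2) = K + (n - 1) * l1"
proof -
  have "(\<Sum>Z\<in>P. (card (N v \<inter> Z))\<^sup>2) = (\<Sum>Z\<in>P. \<Sum>u\<in>N v \<inter> Z. card (N u \<inter> X))"
  proof (rule sum.cong[OF refl])
    fix Z assume "Z \<in> P"
    then have "card (N u \<inter> X) = card (N v \<inter> Z)" if "u \<in> N v \<inter> Z" for u
      using card_nbhd_Int_class_sym[OF assms(1), of Z X u v] assms that by blast
    then show "(card (N v \<inter> Z))\<^sup>2 = (\<Sum>u\<in>N v \<inter> Z. card (N u \<inter> X))"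
      by (simp add: power2_eq_square)
  qed
  also have "\<dots> = (\<Sum>u\<in>N v. card (N u \<inter> X))"
    by (rule sum_partition_on[OF partition finite_Vs nbhd_subset, symmetric])
  also have "\<dots> = (\<Sum>x\<in>X. card (N v \<inter> N x))"
    using sum_card_nbhd_Int_swap[OF simple_graph class_subset[OF assms(2)]] .
  also have "\<dots> = card (N v \<inter> N v) + (\<Sum>x\<in>X - {v}. card (N v \<inter> N x))"
    using finite_subset[OF class_subset[OF assms(2)] finite_Vs] assms(3) by (rule sum.remove)
  also have "\<dots> = K + card (X - {v}) * l1"
  proof -
    have "(\<Sum>x\<in>X - {v}. card (N v \<inter> N x)) = (\<Sum>x\<in>X - {v}. l1)"
      using common_nbhd_same_class[OF assms(2,3)] by (intro sum.cong) auto
    then show ?thesis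
      using degree[of v] class_subset[OF assms(2)] assms(3) by auto
  qed
  also have "\<dots> = K + (n - 1) * l1"
    using card_class[OF assms(2)] assms(3) finite_subset[OF class_subset[OF assms(2)] finite_Vs]
    by simp
  finally show ?thesis .
qed

end

lemma lemma4p1_parameters:
  fixes n K l1 l2 m :: nat and s :: int
  assumes "s < 0" and "int n + s > 0"
    and "real m = real_of_int ((- s) * (int n - 1)) / real_of_int (int n + s)"
    and "int K = (- s) * (int n - 1)"
    and "int l1 = (- s) * (int n + s - 1)"
    and "real l2 = real_of_int ((- s) * (int n - 1) * (int n + s)) / real n"
  shows "int K = int m * (int n + s)"
    and "int K + (int n - 1) * int l1 = int m * (int n + s)\<^sup>2"
    and "l1 \<noteq> l2"
proof -
  have "real_of_int (int m * (int n + s)) = real_of_int ((- s) * (int n - 1))"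
    using assms(2,3) by (simp add: field_simps)
  then show K: "int K = int m * (int n + s)"
    using assms(4) by linarith
  have "int K + (int n - 1) * int l1 = int K * (int n + s)"
    unfolding assms(4,5) by (simp add: algebra_simps)
  then show "int K + (int n - 1) * int l1 = int m * (int n + s)\<^sup>2"
    using K by (simp add: power2_eq_square)
  have "real_of_int (int l2 * int n) = real_of_int ((- s) * (int n - 1) * (int n + s))"
    using assms(1,2,6) by (simp add: field_simps)
  then have "int l2 * int n = (- s) * (int n - 1) * (int n + s)"
    by linarith
  moreover have "int l1 * int n - (- s) * (int n - 1) * (int n + s) = - s * s"
    unfolding assms(5) by (simp add: algebra_simps)
  ultimately show "l1 \<noteq> l2"
    using assms(1) by auto
qed

theorem lemma4p1:
  fixes Vs :: "'a set" and E :: "'a \<Rightarrow> 'a \<Rightarrow> bool" and P :: "'a set set"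
    and n :: nat and s :: int and V K l1 l2 m :: nat
  assumes "s < 0" and "int n + s > 0"
    and "real m = real_of_int ((- s) * (int n - 1)) / real_of_int (int n + s)"
    and "real V = real_of_int (int n * (- s) * (int n - 1)) / real_of_int (int n + s)"
    and "int K = (- s) * (int n - 1)"
    and "int l1 = (- s) * (int n + s - 1)"
    and "real l2 = real_of_int ((- s) * (int n - 1) * (int n + s)) / real n"
    and "ddg Vs E P V K l1 l2 m n"
  shows "\<forall>Pi\<in>P. \<forall>Pj\<in>P. \<forall>v\<in>Pi. int (card (nbhd Vs E v \<inter> Pj)) = int n + s"
proof (intro ballI)
  interpret divisible_design_graph Vs E P V K l1 l2 m n
    using assms(8) by (rule divisible_design_graph.intro)
  note params = lemma4p1_parameters[OF assms(1-3,5-7)]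
  fix X Y v assume "X \<in> P" "Y \<in> P" "v \<in> X"
  then have "v \<in> Vs" using class_subset by blast
  have "int (\<Sum>Z\<in>P. card (N v \<inter> Z)) = int K"
    using sum_card_nbhd_Int_classes[OF \<open>v \<in> Vs\<close>] by (rule arg_cong)
  then have sum_row: "(\<Sum>Z\<in>P. int (card (N v \<inter> Z))) = int (card P) * (int n + s)"
    unfolding of_nat_sum params(1) card_classes .
  have "int (\<Sum>Z\<in>P. (card (N v \<inter> Z))\<^sup>2) = int K + (int n - 1) * int l1"
    using sum_card_nbhd_Int_classes_squared[OF params(3) \<open>X \<in> P\<close> \<open>v \<in> X\<close>] assms(1,2)
    by (simp add: of_nat_diff)
  then have sum_row_squares:
      "(\<Sum>Z\<in>P. (int (card (N v \<inter> Z)))\<^sup>2) = int (card P) * (int n + s)\<^sup>2"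
    unfolding of_nat_sum of_nat_power params(2) card_classes .
  show "int (card (N v \<inter> Y)) = int n + s"
    using eq_const_if_sum_and_sum_squares_eq[OF finite_elements[OF finite_Vs partition]
        sum_row sum_row_squares \<open>Y \<in> P\<close>] .
qed

end
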